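(* Let $\mathfrak g$ be a barrelled locally convex Lie algebra, $(\pi,V)$ a continuous unitary representation of $\mathfrak g$, and $n\in\mathbb N\cup\{\infty\}$. Let $t\mapsto\xi_t$ be a $C^n$-curve in $\mathfrak g$ and $t\mapsto\psi_t$ a $C^n$-curve in $V$ for the strong (resp. weak) topology, both defined on a common real interval. Then $t\mapsto\pi(\xi_t)\psi_t$ is a $C^n$-curve in $V$ for the strong (resp. weak) topology, and for all integers $0\le k\le n$, $$\frac{d^k}{dt^k}\pi(\xi_t)\psi_t=\sum_{j=0}^{k}\binom{k}{j}\pi\big(\xi^{(j)}_t\big)\psi^{(k-j)}_t.$$
   Context: Barrelled: every closed, convex, circled, absorbing subset is a $0$-neighbourhood. A unitary representation $(\pi,V)$ of $\mathfrak g$: $V$ complex pre-Hilbert (completion $\mathcal H_V$), $\pi\colon\mathfrak g\to\mathrm{End}(V)$ a Lie algebra homomorphism with skew-symmetric values. $\pi_n(\xi_n,\dots,\xi_1)=\pi(\xi_n)\cdots\pi(\xi_1)$, $\pi_0(\lambda)=\lambda\mathbf 1$. Continuous: $\boldsymbol\xi\mapsto\pi_n(\boldsymbol\xi)\psi$, $\mathfrak g^n\to\mathcal H_V$, norm continuous for all $n,\psi$. Weak topology: seminorms $\|\pi_n(\boldsymbol\xi)\psi\|$, $\boldsymbol\xi\in\mathfrak g^n$; strong topology: seminorms $\sup_{\boldsymbol\xi\in B}\|\pi_n(\boldsymbol\xi)\psi\|$, $B\subseteq\mathfrak g^n$ bounded. $C^n$-curves into a locally convex space: iterated derivatives (limits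 of difference quotients) up to order $n$ exist and are continuous. *)

theory Defs
  imports "HOL-Analysis.Analysis" "HOL-Library.Extended_Nat"
begin

class complex_vector = real_vector +
  fixes scaleC :: "complex \<Rightarrow> 'a \<Rightarrow> 'a"  (infixr \<open>*\<^sub>C\<close> 75)
  assumes scaleC_add_right: "a *\<^sub>C (x + y) = a *\<^sub>C x + a *\<^sub>C y"
    and scaleC_add_left: "(a + b) *\<^sub>C x = a *\<^sub>C x + b *\<^sub>C x"
    and scaleC_scaleC: "a *\<^sub>C (b *\<^sub>C x) = (a * b) *\<^sub>C x"
    and scaleC_one: "1 *\<^sub>C x = x"
    and scaleR_scaleC: "scaleR r x = complex_of_real r *\<^sub>C x"

text \<open>Convention: linear in the first, conjugate-linear in the second argument.\<close>
class complex_inner = complex_vector + real_normed_vector +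
  fixes cinner :: "'a \<Rightarrow> 'a \<Rightarrow> complex"
  assumes cinner_add_left: "cinner (x + y) z = cinner x z + cinner y z"
    and cinner_scaleC_left: "cinner (c *\<^sub>C x) y = c * cinner x y"
    and cinner_commute: "cinner y x = cnj (cinner x y)"
    and cinner_nonneg: "0 \<le> Re (cinner x x)"
    and norm_cinner: "norm x = sqrt (Re (cinner x x))"

definition lc_lie_algebra :: "('g::{real_vector,t2_space} \<Rightarrow> 'g \<Rightarrow> 'g) \<Rightarrow> bool" where
  "lc_lie_algebra br \<longleftrightarrow>
     continuous_on UNIV (\<lambda>z::'g \<times> 'g. fst z + snd z) \<and>
     continuous_on UNIV (\<lambda>z::real \<times> 'g. fst z *\<^sub>R snd z) \<and>
     (\<forall>U. open U \<and> (0::'g) \<in> U \<longrightarrow> (\<exists>W. open W \<and> convex W \<and> 0 \<in> W \<and> W \<subseteq> U)) \<and>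
     bilinear br \<and>
     (\<forall>x. br x x = 0) \<and>
     (\<forall>x y z. br x (br y z) + br y (br z x) + br z (br x y) = 0) \<and>
     continuous_on UNIV (\<lambda>z::'g \<times> 'g. br (fst z) (snd z))"

definition circled :: "'a::real_vector set \<Rightarrow> bool" where
  "circled B \<longleftrightarrow> (\<forall>c::real. \<bar>c\<bar> \<le> 1 \<longrightarrow> (\<lambda>x. c *\<^sub>R x) ` B \<subseteq> B)"

definition absorbing :: "'a::real_vector set \<Rightarrow> bool" where
  "absorbing B \<longleftrightarrow> (\<forall>x. \<exists>r>0. \<forall>c::real. \<bar>c\<bar> \<le> r \<longrightarrow> c *\<^sub>R x \<in> B)"

definition barrelled :: "'a::{real_vector,topological_space} itself \<Rightarrow> bool" where
  "barrelled _ \<longleftrightarrow> (\<forall>B::'a set. closed B \<and> convex B \<and> circled B \<and> absorbing B \<longrightarrow>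
      (\<exists>U. open U \<and> 0 \<in> U \<and> U \<subseteq> B))"

definition tvs_bounded :: "'a::{real_vector,topological_space} set \<Rightarrow> bool" where
  "tvs_bounded S \<longleftrightarrow> (\<forall>U. open U \<and> 0 \<in> U \<longrightarrow>
      (\<exists>s>0. \<forall>t::real. t > s \<longrightarrow> S \<subseteq> (\<lambda>x. t *\<^sub>R x) ` U))"

text \<open>Elements of g^n are represented as lists of length n.  A subset of the
  product is bounded iff all its coordinate projections are bounded.\<close>
definition gn_bounded :: "nat \<Rightarrow> 'a::{real_vector,topological_space} list set \<Rightarrow> bool" where
  "gn_bounded n B \<longleftrightarrow> (\<forall>xs\<in>B. length xs = n) \<and> (\<forall>i<n. tvs_bounded ((\<lambda>xs. xs ! i) ` B))"

text \<open>pin \<pi> [xi_n,...,xi_1] \<psi> = pi(xi_n)...pi(xi_1)\<psi>; the empty list gives the identity.\<close>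
fun pin :: "('g \<Rightarrow> 'v \<Rightarrow> 'v) \<Rightarrow> 'g list \<Rightarrow> 'v \<Rightarrow> 'v" where
  "pin \<pi> [] \<psi> = \<psi>"
| "pin \<pi> (x # xs) \<psi> = \<pi> x (pin \<pi> xs \<psi>)"

definition unitary_rep :: "('g::real_vector \<Rightarrow> 'g \<Rightarrow> 'g) \<Rightarrow> ('g \<Rightarrow> 'v::complex_inner \<Rightarrow> 'v) \<Rightarrow> bool" where
  "unitary_rep br \<pi> \<longleftrightarrow>
     (\<forall>\<psi>. linear (\<lambda>\<xi>. \<pi> \<xi> \<psi>)) \<and>
     (\<forall>\<xi> \<psi> \<phi>. \<pi> \<xi> (\<psi> + \<phi>) = \<pi> \<xi> \<psi> + \<pi> \<xi> \<phi>) \<and>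
     (\<forall>\<xi> c \<psi>. \<pi> \<xi> (c *\<^sub>C \<psi>) = c *\<^sub>C \<pi> \<xi> \<psi>) \<and>
     (\<forall>\<xi> \<eta> \<psi>. \<pi> (br \<xi> \<eta>) \<psi> = \<pi> \<xi> (\<pi> \<eta> \<psi>) - \<pi> \<eta> (\<pi> \<xi> \<psi>)) \<and>
     (\<forall>\<xi> \<psi> \<phi>. cinner (\<pi> \<xi> \<psi>) \<phi> = - cinner \<psi> (\<pi> \<xi> \<phi>))"

text \<open>Continuity: for all n and \<psi>, the map g^n \<rightarrow> V is continuous for the product
  topology and the norm topology (equivalently, into the completion).\<close>
definition continuous_rep :: "('g::{real_vector,topological_space} \<Rightarrow> 'v::complex_inner \<Rightarrow> 'v) \<Rightarrow> bool" where
  "continuous_rep \<pi> \<longleftrightarrow> (\<forall>n \<psi>.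
     continuous_map (product_topology (\<lambda>_. (euclidean :: 'g topology)) {..<n}) (euclidean :: 'v topology)
       (\<lambda>x. pin \<pi> (map x [0..<n]) \<psi>))"

definition seminorm_topology :: "('v::real_vector \<Rightarrow> ereal) set \<Rightarrow> 'v topology" where
  "seminorm_topology S = topology (\<lambda>U. \<forall>x\<in>U. \<exists>F \<epsilon>. finite F \<and> F \<subseteq> S \<and> \<epsilon> > 0 \<and>
      {y. \<forall>p\<in>F. p (y - x) < ereal \<epsilon>} \<subseteq> U)"

definition weak_top :: "('g \<Rightarrow> 'v::complex_inner \<Rightarrow> 'v) \<Rightarrow> 'v topology" where
  "weak_top \<pi> = seminorm_topology {(\<lambda>\<psi>. ereal (norm (pin \<pi> xs \<psi>))) | xs. True}"

definition strong_top :: "('g::{real_vector,topological_space} \<Rightarrow> 'v::complex_inner \<Rightarrow> 'v) \<Rightarrow> 'v topology" where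
  "strong_top \<pi> = seminorm_topology
     {(\<lambda>\<psi>. SUP xs\<in>B. ereal (norm (pin \<pi> xs \<psi>))) | n B. gn_bounded n B}"

text \<open>A curve \<gamma> is C^n iff
  such a family with D 0 = \<gamma> on I exists; D k is then its k-th derivative.\<close>
definition Cn_family :: "'v::real_vector topology \<Rightarrow> real set \<Rightarrow> enat \<Rightarrow> (nat \<Rightarrow> real \<Rightarrow> 'v) \<Rightarrow> bool" where
  "Cn_family X I n D \<longleftrightarrow>
     (\<forall>k. enat k \<le> n \<longrightarrow> continuous_map (top_of_set I) X (D k)) \<and>
     (\<forall>k. enat k < n \<longrightarrow> (\<forall>t\<in>I.
        limitin X (\<lambda>s. inverse (s - t) *\<^sub>R (D k s - D k t)) (D (Suc k) t) (at t within I)))"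

end

theory Submission
  imports Defs
begin

text \<open>
  The strong and the weak topology are both generated by seminorms
  \<open>\<psi> \<mapsto> sup {\<parallel>\<pi>\<^sub>n(xs) \<psi>\<parallel> | xs \<in> B}\<close>, where \<open>B\<close> ranges over a family of sets of tuples
  (singletons, resp. bounded subsets of \<open>g\<^sup>n\<close>) that is closed under appending one entry.
  Convergence means convergence to zero of every seminorm, so the Leibniz formula follows
  from the product rule for difference quotients once \<open>(\<xi>, \<psi>) \<mapsto> \<pi>(\<xi>)\<psi>\<close> is jointly
  continuous along the curves. Continuity in \<open>\<psi>\<close> for fixed \<open>\<xi>\<close> is immediate, as appending
  \<open>\<xi>\<close> to the tuples of \<open>B\<close> gives another seminorm of the family. Continuity in \<open>\<xi>\<close>,
  uniformly along a convergent sequence \<open>\<psi>\<^sub>m\<close>, is a Banach--Steinhaus argument: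
  \<open>{\<xi>. \<forall>m, xs\<in>B. \<parallel>\<pi>\<^sub>n(xs) \<pi>(\<xi>) \<psi>\<^sub>m\<parallel> \<le> 1}\<close> is a barrel, hence a neighbourhood of \<open>0\<close>.
  For the strong topology the seminorms are finite because \<open>\<pi>\<^sub>n\<close> is continuous at \<open>0\<close>
  and bounded sets are absorbed by neighbourhoods of \<open>0\<close>.
\<close>

lemma atin_within_euclidean: "atin_within euclidean a S = at a within S"
proof -
  have "eventually P (atin_within euclidean a S) \<longleftrightarrow> eventually P (at a within S)" for P
    by (simp add: eventually_atin_within eventually_at_topological) metis
  then show ?thesis
    by (simp add: filter_eq_iff)
qed

lemma continuous_map_top_of_set_iff_limitin:
  "continuous_map (top_of_set I) X f \<longleftrightarrow> (\<forall>t\<in>I. limitin X f (f t) (at t within I))"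
  by (simp add: continuous_map_atin atin_subtopology_within atin_within_euclidean)

lemma istopology_seminorm_balls:
  "istopology (\<lambda>U. \<forall>x\<in>U. \<exists>F \<epsilon>. finite F \<and> F \<subseteq> S \<and> \<epsilon> > 0 \<and>
      {y. \<forall>p\<in>F. p (y - x) < ereal \<epsilon>} \<subseteq> U)"
  unfolding istopology_def
proof (intro conjI allI impI ballI)
  fix U V x
  assume "\<forall>x\<in>U. \<exists>F \<epsilon>. finite F \<and> F \<subseteq> S \<and> \<epsilon> > 0 \<and> {y. \<forall>p\<in>F. p (y - x) < ereal \<epsilon>} \<subseteq> U"
    and "\<forall>x\<in>V. \<exists>F \<epsilon>. finite F \<and> F \<subseteq> S \<and> \<epsilon> > 0 \<and> {y. \<forall>p\<in>F. p (y - x) < ereal \<epsilon>} \<subseteq> V"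
    and "x \<in> U \<inter> V"
  then obtain F1 e1 F2 e2 where F1: "finite F1" "F1 \<subseteq> S" "e1 > 0"
      and U: "{y. \<forall>p\<in>F1. p (y - x) < ereal e1} \<subseteq> U"
    and F2: "finite F2" "F2 \<subseteq> S" "e2 > 0"
      and V: "{y. \<forall>p\<in>F2. p (y - x) < ereal e2} \<subseteq> V"
    by (meson IntD1 IntD2)
  have "{y. \<forall>p\<in>F1 \<union> F2. p (y - x) < ereal (min e1 e2)} \<subseteq>
      {y. \<forall>p\<in>F1. p (y - x) < ereal e1} \<inter> {y. \<forall>p\<in>F2. p (y - x) < ereal e2}"
    by (force intro: order.strict_trans2)
  with U V have "{y. \<forall>p\<in>F1 \<union> F2. p (y - x) < ereal (min e1 e2)} \<subseteq> U \<inter> V"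
    by blast
  moreover have "finite (F1 \<union> F2)" "F1 \<union> F2 \<subseteq> S" "min e1 e2 > 0"
    using F1 F2 by auto
  ultimately show "\<exists>F \<epsilon>. finite F \<and> F \<subseteq> S \<and> \<epsilon> > 0 \<and> {y. \<forall>p\<in>F. p (y - x) < ereal \<epsilon>} \<subseteq> U \<inter> V"
    by (intro exI[of _ "F1 \<union> F2"] exI[of _ "min e1 e2"] conjI)
next
  fix K x
  assume K: "\<forall>U\<in>K. \<forall>x\<in>U. \<exists>F \<epsilon>. finite F \<and> F \<subseteq> S \<and> \<epsilon> > 0 \<and> {y. \<forall>p\<in>F. p (y - x) < ereal \<epsilon>} \<subseteq> U"
    and "x \<in> \<Union>K"
  from \<open>x \<in> \<Union>K\<close> obtain U where "U \<in> K" "x \<in> U"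
    by blast
  from bspec[OF bspec[OF K this(1)] this(2)] obtain F \<epsilon>
    where "finite F" "F \<subseteq> S" "\<epsilon> > 0" "{y. \<forall>p\<in>F. p (y - x) < ereal \<epsilon>} \<subseteq> U"
    by blast
  with \<open>U \<in> K\<close> show "\<exists>F \<epsilon>. finite F \<and> F \<subseteq> S \<and> \<epsilon> > 0 \<and> {y. \<forall>p\<in>F. p (y - x) < ereal \<epsilon>} \<subseteq> \<Union>K"
    by (intro exI[of _ F] exI[of _ \<epsilon>] conjI) (auto dest: Union_upper)
qed

lemma openin_seminorm_topology:
  "openin (seminorm_topology S) U \<longleftrightarrow>
     (\<forall>x\<in>U. \<exists>F \<epsilon>. finite F \<and> F \<subseteq> S \<and> \<epsilon> > 0 \<and> {y. \<forall>p\<in>F. p (y - x) < ereal \<epsilon>} \<subseteq> U)"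
  unfolding seminorm_topology_def by (rule fun_cong[OF topology_inverse'[OF istopology_seminorm_balls]])

lemma topspace_seminorm_topology [simp]: "topspace (seminorm_topology S) = UNIV"
proof -
  have "openin (seminorm_topology S) UNIV"
    unfolding openin_seminorm_topology by (intro ballI exI[of _ "{}"] exI[of _ 1]) auto
  then show ?thesis
    by (meson openin_subset top.extremum_uniqueI)
qed

section \<open>Seminorms of a unitary representation\<close>

lemma pin_append: "pin \<pi> (xs @ ys) \<psi> = pin \<pi> xs (pin \<pi> ys \<psi>)"
  by (induction xs) auto

locale unitary_representation =
  fixes br :: "'g::real_vector \<Rightarrow> 'g \<Rightarrow> 'g" and \<pi> :: "'g \<Rightarrow> 'v::complex_inner \<Rightarrow> 'v"
  assumes unitary: "unitary_rep br \<pi>"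
begin

lemma linear_pi_left: "linear (\<lambda>x. \<pi> x \<psi>)"
  using unitary unfolding unitary_rep_def by blast

lemma linear_pi: "linear (\<pi> x)"
  using unitary by (intro linearI) (auto simp: unitary_rep_def scaleR_scaleC)

lemma linear_pin: "linear (pin \<pi> xs)"
proof (induction xs)
  case Nil
  show ?case by (auto intro: linearI)
next
  case (Cons x xs)
  from linear_compose[OF this linear_pi] show ?case
    by (simp add: o_def)
qed

lemma linear_pin_pi_left: "linear (\<lambda>x. pin \<pi> xs (\<pi> x \<psi>))"
  using linear_compose[OF linear_pi_left linear_pin] by (simp add: o_def)

lemma pin_map_scaleR: "pin \<pi> (map ((*\<^sub>R) c) xs) \<psi> = (c ^ length xs) *\<^sub>R pin \<pi> xs \<psi>"
  by (induction xs) (simp_all add: linear_scale[OF linear_pi_left] linear_scale[OF linear_pi])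

lemma scaleR_pi_diff:
  "c *\<^sub>R (\<pi> x \<psi> - \<pi> x' \<psi>') = \<pi> (c *\<^sub>R (x - x')) \<psi> + \<pi> x' (c *\<^sub>R (\<psi> - \<psi>'))"
  by (simp add: linear_scale[OF linear_pi_left] linear_diff[OF linear_pi_left]
      linear_scale[OF linear_pi] linear_diff[OF linear_pi] algebra_simps)

end

text \<open>\<open>pin_seminorm \<pi> B\<close> is meaningful only when \<open>pin_bounded \<pi> B\<close>; for \<open>B = {}\<close> the
  supremum is \<open>-\<infinity>\<close> and the seminorm is \<open>0\<close>.\<close>

definition pin_sup :: "('g \<Rightarrow> 'v::complex_inner \<Rightarrow> 'v) \<Rightarrow> 'g list set \<Rightarrow> 'v \<Rightarrow> ereal" where
  "pin_sup \<pi> B \<psi> = (SUP xs\<in>B. ereal (norm (pin \<pi> xs \<psi>)))"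

definition pin_bounded :: "('g \<Rightarrow> 'v::complex_inner \<Rightarrow> 'v) \<Rightarrow> 'g list set \<Rightarrow> bool" where
  "pin_bounded \<pi> B \<longleftrightarrow> (\<forall>\<psi>. pin_sup \<pi> B \<psi> < \<infinity>)"

definition pin_seminorm :: "('g \<Rightarrow> 'v::complex_inner \<Rightarrow> 'v) \<Rightarrow> 'g list set \<Rightarrow> 'v \<Rightarrow> real" where
  "pin_seminorm \<pi> B \<psi> = real_of_ereal (pin_sup \<pi> B \<psi>)"

definition pin_topology :: "('g \<Rightarrow> 'v::complex_inner \<Rightarrow> 'v) \<Rightarrow> 'g list set set \<Rightarrow> 'v topology" where
  "pin_topology \<pi> \<B> = seminorm_topology (pin_sup \<pi> ` \<B>)"

definition pin_tendsto ::
  "('g \<Rightarrow> 'v::complex_inner \<Rightarrow> 'v) \<Rightarrow> 'g list set set \<Rightarrow> ('a \<Rightarrow> 'v) \<Rightarrow> 'v \<Rightarrow> 'a filter \<Rightarrow> bool" where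
  "pin_tendsto \<pi> \<B> f l F \<longleftrightarrow> (\<forall>B\<in>\<B>. ((\<lambda>x. pin_seminorm \<pi> B (f x - l)) \<longlongrightarrow> 0) F)"

lemma pin_sup_eq_pin_seminorm:
  assumes "pin_bounded \<pi> B" "B \<noteq> {}"
  shows "pin_sup \<pi> B \<psi> = ereal (pin_seminorm \<pi> B \<psi>)"
proof -
  from assms(2) obtain xs where "xs \<in> B"
    by blast
  then have "ereal 0 \<le> pin_sup \<pi> B \<psi>"
    unfolding pin_sup_def by (rule SUP_upper2) simp
  moreover have "pin_sup \<pi> B \<psi> < \<infinity>"
    using assms(1) by (simp add: pin_bounded_def)
  ultimately show ?thesis
    unfolding pin_seminorm_def by (cases "pin_sup \<pi> B \<psi>") auto
qed

lemma pin_seminorm_nonneg: "0 \<le> pin_seminorm \<pi> B \<psi>"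
proof (cases "B = {}")
  case False
  then obtain xs where "xs \<in> B"
    by blast
  then have "0 \<le> pin_sup \<pi> B \<psi>"
    unfolding pin_sup_def zero_ereal_def by (rule SUP_upper2) simp
  then show ?thesis
    unfolding pin_seminorm_def by (rule real_of_ereal_pos)
qed (simp add: pin_seminorm_def pin_sup_def bot_ereal_def)

lemma pin_seminorm_le_iff:
  assumes "pin_bounded \<pi> B" "0 \<le> M"
  shows "pin_seminorm \<pi> B \<psi> \<le> M \<longleftrightarrow> (\<forall>xs\<in>B. norm (pin \<pi> xs \<psi>) \<le> M)"
proof (cases "B = {}")
  case False
  have "pin_seminorm \<pi> B \<psi> \<le> M \<longleftrightarrow> pin_sup \<pi> B \<psi> \<le> ereal M"
    using pin_sup_eq_pin_seminorm[OF assms(1) False] by simp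
  also have "\<dots> \<longleftrightarrow> (\<forall>xs\<in>B. norm (pin \<pi> xs \<psi>) \<le> M)"
    by (simp add: pin_sup_def SUP_le_iff)
  finally show ?thesis .
qed (simp add: assms(2) pin_seminorm_def pin_sup_def bot_ereal_def)

lemma pin_sup_less_iff:
  assumes "pin_bounded \<pi> B" "0 < e"
  shows "pin_sup \<pi> B \<psi> < ereal e \<longleftrightarrow> pin_seminorm \<pi> B \<psi> < e"
proof (cases "B = {}")
  case False
  then show ?thesis
    using pin_sup_eq_pin_seminorm[OF assms(1) False] by simp
qed (simp add: assms(2) pin_seminorm_def pin_sup_def bot_ereal_def)

lemma norm_pin_le_pin_seminorm:
  assumes "pin_bounded \<pi> B" "xs \<in> B"
  shows "norm (pin \<pi> xs \<psi>) \<le> pin_seminorm \<pi> B \<psi>"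
  using pin_seminorm_le_iff[OF assms(1) pin_seminorm_nonneg] assms(2) by blast

context unitary_representation
begin

lemma pin_seminorm_triangle:
  assumes "pin_bounded \<pi> B"
  shows "pin_seminorm \<pi> B (\<psi> + \<phi>) \<le> pin_seminorm \<pi> B \<psi> + pin_seminorm \<pi> B \<phi>"
proof -
  have "norm (pin \<pi> xs (\<psi> + \<phi>)) \<le> pin_seminorm \<pi> B \<psi> + pin_seminorm \<pi> B \<phi>" if "xs \<in> B" for xs
    using norm_triangle_ineq[of "pin \<pi> xs \<psi>" "pin \<pi> xs \<phi>"]
      norm_pin_le_pin_seminorm[OF assms that, of \<psi>] norm_pin_le_pin_seminorm[OF assms that, of \<phi>]
    by (simp add: linear_add[OF linear_pin])
  moreover have "0 \<le> pin_seminorm \<pi> B \<psi> + pin_seminorm \<pi> B \<phi>"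
    by (simp add: pin_seminorm_nonneg)
  ultimately show ?thesis
    by (simp add: pin_seminorm_le_iff[OF assms])
qed

lemma pin_seminorm_scaleR:
  assumes "pin_bounded \<pi> B"
  shows "pin_seminorm \<pi> B (c *\<^sub>R \<psi>) \<le> \<bar>c\<bar> * pin_seminorm \<pi> B \<psi>"
proof -
  have "norm (pin \<pi> xs (c *\<^sub>R \<psi>)) \<le> \<bar>c\<bar> * pin_seminorm \<pi> B \<psi>" if "xs \<in> B" for xs
    using norm_pin_le_pin_seminorm[OF assms that, of \<psi>]
    by (simp add: linear_scale[OF linear_pin] mult_left_mono)
  moreover have "0 \<le> \<bar>c\<bar> * pin_seminorm \<pi> B \<psi>"
    by (simp add: pin_seminorm_nonneg)
  ultimately show ?thesis
    by (simp add: pin_seminorm_le_iff[OF assms])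
qed

lemma pin_seminorm_zero [simp]:
  assumes "pin_bounded \<pi> B"
  shows "pin_seminorm \<pi> B 0 = 0"
  using pin_seminorm_scaleR[OF assms, of 0 0] pin_seminorm_nonneg[of \<pi> B 0] by simp

lemma pin_seminorm_pi_le:
  assumes "pin_bounded \<pi> B" "pin_bounded \<pi> ((\<lambda>xs. xs @ [x]) ` B)"
  shows "pin_seminorm \<pi> B (\<pi> x \<psi>) \<le> pin_seminorm \<pi> ((\<lambda>xs. xs @ [x]) ` B) \<psi>"
proof -
  have "norm (pin \<pi> xs (\<pi> x \<psi>)) \<le> pin_seminorm \<pi> ((\<lambda>xs. xs @ [x]) ` B) \<psi>" if "xs \<in> B" for xs
    using norm_pin_le_pin_seminorm[OF assms(2), of "xs @ [x]" \<psi>] that by (simp add: pin_append)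
  then show ?thesis
    by (simp add: pin_seminorm_le_iff[OF assms(1) pin_seminorm_nonneg])
qed

end

lemma pin_tendsto_compose:
  assumes "pin_tendsto \<pi> \<B> f l F" "filterlim g F G"
  shows "pin_tendsto \<pi> \<B> (f \<circ> g) l G"
  using assms filterlim_compose unfolding pin_tendsto_def o_def by blast

lemma pin_tendstoI:
  assumes "\<And>B e. B \<in> \<B> \<Longrightarrow> e > 0 \<Longrightarrow> eventually (\<lambda>x. pin_seminorm \<pi> B (f x - l) \<le> e) F"
  shows "pin_tendsto \<pi> \<B> f l F"
  unfolding pin_tendsto_def
proof (intro ballI order_tendstoI)
  fix B and e :: real
  assume "B \<in> \<B>" "0 < e"
  then have "eventually (\<lambda>x. pin_seminorm \<pi> B (f x - l) \<le> e / 2) F"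
    by (intro assms) auto
  with \<open>0 < e\<close> show "eventually (\<lambda>x. pin_seminorm \<pi> B (f x - l) < e) F"
    by (auto elim: eventually_mono)
next
  fix B and e :: real
  assume "e < 0"
  then show "eventually (\<lambda>x. e < pin_seminorm \<pi> B (f x - l)) F"
    using pin_seminorm_nonneg by (intro always_eventually allI) (rule order.strict_trans2)
qed

locale pin_seminorm_family = unitary_representation +
  fixes \<B> :: "'g::real_vector list set set"
  assumes bounded_family: "B \<in> \<B> \<Longrightarrow> pin_bounded \<pi> B"
begin

lemma openin_pin_seminorm_ball:
  assumes "B \<in> \<B>"
  shows "openin (pin_topology \<pi> \<B>) {\<phi>. pin_seminorm \<pi> B (\<phi> - \<psi>) < e}"
  unfolding pin_topology_def openin_seminorm_topology
proof
  fix \<phi> assume "\<phi> \<in> {\<phi>. pin_seminorm \<pi> B (\<phi> - \<psi>) < e}"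
  then have d: "e - pin_seminorm \<pi> B (\<phi> - \<psi>) > 0"
    by simp
  have "pin_seminorm \<pi> B (\<omega> - \<psi>) < e" if "pin_seminorm \<pi> B (\<omega> - \<phi>) < e - pin_seminorm \<pi> B (\<phi> - \<psi>)" for \<omega>
    using pin_seminorm_triangle[OF bounded_family[OF assms], of "\<omega> - \<phi>" "\<phi> - \<psi>"] that by simp
  then have "{\<omega>. \<forall>p\<in>{pin_sup \<pi> B}. p (\<omega> - \<phi>) < ereal (e - pin_seminorm \<pi> B (\<phi> - \<psi>))}
      \<subseteq> {\<phi>. pin_seminorm \<pi> B (\<phi> - \<psi>) < e}"
    by (auto simp: pin_sup_less_iff[OF bounded_family[OF assms] d])
  with d assms show "\<exists>F \<epsilon>. finite F \<and> F \<subseteq> pin_sup \<pi> ` \<B> \<and> \<epsilon> > 0 \<and>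
      {\<omega>. \<forall>p\<in>F. p (\<omega> - \<phi>) < ereal \<epsilon>} \<subseteq> {\<phi>. pin_seminorm \<pi> B (\<phi> - \<psi>) < e}"
    by (intro exI[of _ "{pin_sup \<pi> B}"] exI[of _ "e - pin_seminorm \<pi> B (\<phi> - \<psi>)"]) auto
qed

lemma limitin_pin_topology_iff: "limitin (pin_topology \<pi> \<B>) f l F \<longleftrightarrow> pin_tendsto \<pi> \<B> f l F"
proof
  assume lim: "limitin (pin_topology \<pi> \<B>) f l F"
  show "pin_tendsto \<pi> \<B> f l F"
  proof (rule pin_tendstoI)
    fix B and e :: real
    assume "B \<in> \<B>" "0 < e"
    then have "l \<in> {\<phi>. pin_seminorm \<pi> B (\<phi> - l) < e}"
      using bounded_family by simp
    with lim openin_pin_seminorm_ball[OF \<open>B \<in> \<B>\<close>]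
    have "eventually (\<lambda>x. f x \<in> {\<phi>. pin_seminorm \<pi> B (\<phi> - l) < e}) F"
      unfolding limitin_def by blast
    then show "eventually (\<lambda>x. pin_seminorm \<pi> B (f x - l) \<le> e) F"
      by (auto elim: eventually_mono)
  qed
next
  assume lim: "pin_tendsto \<pi> \<B> f l F"
  show "limitin (pin_topology \<pi> \<B>) f l F"
    unfolding limitin_def pin_topology_def topspace_seminorm_topology
  proof (intro conjI allI impI UNIV_I)
    fix U assume "openin (seminorm_topology (pin_sup \<pi> ` \<B>)) U \<and> l \<in> U"
    then obtain G e where G: "finite G" "G \<subseteq> pin_sup \<pi> ` \<B>" "e > 0"
      and U: "{\<phi>. \<forall>p\<in>G. p (\<phi> - l) < ereal e} \<subseteq> U"
      unfolding openin_seminorm_topology by blast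
    have "eventually (\<lambda>x. p (f x - l) < ereal e) F" if "p \<in> G" for p
    proof -
      from that G(2) obtain B where B: "B \<in> \<B>" "p = pin_sup \<pi> B"
        by blast
      with lim have "((\<lambda>x. pin_seminorm \<pi> B (f x - l)) \<longlongrightarrow> 0) F"
        unfolding pin_tendsto_def by blast
      from order_tendstoD(2)[OF this \<open>e > 0\<close>] show ?thesis
        unfolding B(2) pin_sup_less_iff[OF bounded_family[OF B(1)] \<open>e > 0\<close>] .
    qed
    with G(1) have "eventually (\<lambda>x. \<forall>p\<in>G. p (f x - l) < ereal e) F"
      by (simp add: eventually_ball_finite)
    then show "eventually (\<lambda>x. f x \<in> U) F"
      by (rule eventually_mono) (use U in blast)
  qed
qed

lemma pin_tendsto_dominated:
  assumes "\<And>B x. B \<in> \<B> \<Longrightarrow> pin_seminorm \<pi> B (f x - l) \<le> g B x"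
    and "\<And>B. B \<in> \<B> \<Longrightarrow> (g B \<longlongrightarrow> 0) F"
  shows "pin_tendsto \<pi> \<B> f l F"
  unfolding pin_tendsto_def
proof
  fix B assume B: "B \<in> \<B>"
  show "((\<lambda>x. pin_seminorm \<pi> B (f x - l)) \<longlongrightarrow> 0) F"
  proof (rule Lim_null_comparison[of _ "g B", OF always_eventually])
    show "\<forall>x. norm (pin_seminorm \<pi> B (f x - l)) \<le> g B x"
      using assms(1)[OF B] by (simp add: pin_seminorm_nonneg)
  qed (rule assms(2)[OF B])
qed

lemma pin_tendsto_add:
  assumes "pin_tendsto \<pi> \<B> f l F" "pin_tendsto \<pi> \<B> g m F"
  shows "pin_tendsto \<pi> \<B> (\<lambda>x. f x + g x) (l + m) F"
proof (rule pin_tendsto_dominated)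
  fix B x assume "B \<in> \<B>"
  from pin_seminorm_triangle[OF bounded_family[OF this], of "f x - l" "g x - m"]
  show "pin_seminorm \<pi> B (f x + g x - (l + m)) \<le> pin_seminorm \<pi> B (f x - l) + pin_seminorm \<pi> B (g x - m)"
    by (simp add: algebra_simps)
next
  fix B assume "B \<in> \<B>"
  with assms show "((\<lambda>x. pin_seminorm \<pi> B (f x - l) + pin_seminorm \<pi> B (g x - m)) \<longlongrightarrow> 0) F"
    unfolding pin_tendsto_def using tendsto_add_zero by blast
qed

lemma pin_tendsto_scaleR:
  assumes "pin_tendsto \<pi> \<B> f l F"
  shows "pin_tendsto \<pi> \<B> (\<lambda>x. c *\<^sub>R f x) (c *\<^sub>R l) F"
proof (rule pin_tendsto_dominated)
  fix B x assume "B \<in> \<B>"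
  from pin_seminorm_scaleR[OF bounded_family[OF this], of c "f x - l"]
  show "pin_seminorm \<pi> B (c *\<^sub>R f x - c *\<^sub>R l) \<le> \<bar>c\<bar> * pin_seminorm \<pi> B (f x - l)"
    by (simp add: algebra_simps)
next
  fix B assume "B \<in> \<B>"
  with assms show "((\<lambda>x. \<bar>c\<bar> * pin_seminorm \<pi> B (f x - l)) \<longlongrightarrow> 0) F"
    unfolding pin_tendsto_def using tendsto_mult_right_zero by blast
qed

lemma pin_tendsto_const: "pin_tendsto \<pi> \<B> (\<lambda>x. l) l F"
  by (simp add: pin_tendsto_def bounded_family)

lemma pin_tendsto_sum:
  assumes "\<And>j. j \<in> J \<Longrightarrow> pin_tendsto \<pi> \<B> (f j) (l j) F"
  shows "pin_tendsto \<pi> \<B> (\<lambda>x. \<Sum>j\<in>J. f j x) (\<Sum>j\<in>J. l j) F"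
  using assms
proof (induction J rule: infinite_finite_induct)
  case (insert j J)
  then show ?case
    using pin_tendsto_add[of "f j" "l j" F] by simp
qed (simp_all add: pin_tendsto_const)

end

section \<open>Barrelled Lie algebras and bounded sets\<close>

lemma lc_lie_algebra_tendsto_scaleR:
  fixes br :: "'g::{real_vector,t2_space} \<Rightarrow> 'g \<Rightarrow> 'g" and f :: "'a \<Rightarrow> 'g"
  assumes "lc_lie_algebra br" "(f \<longlongrightarrow> x) F" "(c \<longlongrightarrow> a) F"
  shows "((\<lambda>s. c s *\<^sub>R f s) \<longlongrightarrow> a *\<^sub>R x) F"
proof -
  have "continuous_on UNIV (\<lambda>z::real \<times> 'g. fst z *\<^sub>R snd z)"
    using assms(1) unfolding lc_lie_algebra_def by blast
  from continuous_on_tendsto_compose[OF this tendsto_Pair[OF assms(3) assms(2)]] show ?thesis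
    by simp
qed

lemma lc_lie_algebra_tendsto_add:
  fixes br :: "'g::{real_vector,t2_space} \<Rightarrow> 'g \<Rightarrow> 'g" and f g :: "'a \<Rightarrow> 'g"
  assumes "lc_lie_algebra br" "(f \<longlongrightarrow> x) F" "(g \<longlongrightarrow> y) F"
  shows "((\<lambda>s. f s + g s) \<longlongrightarrow> x + y) F"
proof -
  have "continuous_on UNIV (\<lambda>z::'g \<times> 'g. fst z + snd z)"
    using assms(1) unfolding lc_lie_algebra_def by blast
  from continuous_on_tendsto_compose[OF this tendsto_Pair[OF assms(2,3)]] show ?thesis
    by simp
qed

lemma lc_lie_algebra_tendsto_diff:
  fixes br :: "'g::{real_vector,t2_space} \<Rightarrow> 'g \<Rightarrow> 'g" and f g :: "'a \<Rightarrow> 'g"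
  assumes "lc_lie_algebra br" "(f \<longlongrightarrow> x) F" "(g \<longlongrightarrow> y) F"
  shows "((\<lambda>s. f s - g s) \<longlongrightarrow> x - y) F"
  using lc_lie_algebra_tendsto_add[OF assms(1,2)
      lc_lie_algebra_tendsto_scaleR[OF assms(1,3) tendsto_const[of "-1"]]]
  by simp

lemma tvs_bounded_subset: "tvs_bounded S \<Longrightarrow> T \<subseteq> S \<Longrightarrow> tvs_bounded T"
  unfolding tvs_bounded_def by (meson order.trans)

lemma tvs_bounded_singleton:
  fixes br :: "'g::{real_vector,t2_space} \<Rightarrow> 'g \<Rightarrow> 'g" and y :: 'g
  assumes "lc_lie_algebra br"
  shows "tvs_bounded {y}"
  unfolding tvs_bounded_def
proof (intro allI impI)
  fix U :: "'g set" assume U: "open U \<and> 0 \<in> U"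
  have "((\<lambda>c. c *\<^sub>R y) \<longlongrightarrow> 0 *\<^sub>R y) (at_right 0)"
    using lc_lie_algebra_tendsto_scaleR[OF assms tendsto_const tendsto_ident_at] .
  with U have "eventually (\<lambda>c. c *\<^sub>R y \<in> U) (at_right 0)"
    by (intro topological_tendstoD) auto
  then obtain d where d: "d > 0" "\<And>c. 0 < c \<Longrightarrow> c < d \<Longrightarrow> c *\<^sub>R y \<in> U"
    unfolding eventually_at_right_field by auto
  show "\<exists>s>0. \<forall>t. s < t \<longrightarrow> {y} \<subseteq> (\<lambda>x. t *\<^sub>R x) ` U"
  proof (intro exI[of _ "1 / d"] conjI allI impI)
    fix t :: real assume t: "1 / d < t"
    with d have "t > 0" "inverse t < d"
      using less_trans[of 0 "1 / d" t] by (auto simp: field_simps)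
    then have "inverse t *\<^sub>R y \<in> U"
      by (intro d(2)) auto
    moreover have "y = t *\<^sub>R (inverse t *\<^sub>R y)"
      using \<open>t > 0\<close> by simp
    ultimately show "{y} \<subseteq> (\<lambda>x. t *\<^sub>R x) ` U"
      by blast
  qed (use d in simp)
qed

lemma gn_bounded_append:
  fixes br :: "'g::{real_vector,t2_space} \<Rightarrow> 'g \<Rightarrow> 'g" and y :: 'g
  assumes "lc_lie_algebra br" "gn_bounded n B"
  shows "gn_bounded (Suc n) ((\<lambda>xs. xs @ [y]) ` B)"
proof -
  have len: "length xs = n" if "xs \<in> B" for xs
    using assms(2) that unfolding gn_bounded_def by blast
  have "tvs_bounded ((\<lambda>xs. xs ! i) ` (\<lambda>xs. xs @ [y]) ` B)" if "i < Suc n" for i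
  proof (cases "i < n")
    case True
    then have "(\<lambda>xs. xs ! i) ` (\<lambda>xs. xs @ [y]) ` B \<subseteq> (\<lambda>xs. xs ! i) ` B"
      by (auto simp: image_image nth_append len)
    moreover have "tvs_bounded ((\<lambda>xs. xs ! i) ` B)"
      using assms(2) True unfolding gn_bounded_def by blast
    ultimately show ?thesis
      using tvs_bounded_subset by blast
  next
    case False
    with that have "(\<lambda>xs. xs ! i) ` (\<lambda>xs. xs @ [y]) ` B \<subseteq> {y}"
      by (auto simp: image_image nth_append len)
    then show ?thesis
      using tvs_bounded_subset tvs_bounded_singleton[OF assms(1)] by blast
  qed
  then show ?thesis
    unfolding gn_bounded_def by (auto simp: len)
qed

lemma absorbing_pointwise_bounded:
  fixes T :: "'i \<Rightarrow> 'g::real_vector \<Rightarrow> 'w::real_normed_vector"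
  assumes lin: "\<And>i. i \<in> J \<Longrightarrow> linear (T i)"
    and bounded: "\<And>y. \<exists>M. \<forall>i\<in>J. norm (T i y) \<le> M"
  shows "absorbing (\<Inter>i\<in>J. T i -` cball 0 1)"
  unfolding absorbing_def
proof
  fix y
  obtain M where M: "\<And>i. i \<in> J \<Longrightarrow> norm (T i y) \<le> M"
    using bounded by blast
  define r where "r = inverse (max M 1)"
  have "norm (T i (c *\<^sub>R y)) \<le> 1" if c: "\<bar>c\<bar> \<le> r" and "i \<in> J" for c i
  proof -
    have "norm (T i (c *\<^sub>R y)) = \<bar>c\<bar> * norm (T i y)"
      by (simp add: linear_scale[OF lin[OF \<open>i \<in> J\<close>]])
    also have "\<dots> \<le> r * max M 1"
      using c M[OF \<open>i \<in> J\<close>] by (intro mult_mono) (auto simp: r_def)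
    also have "\<dots> = 1"
      by (simp add: r_def)
    finally show ?thesis .
  qed
  moreover have "r > 0"
    by (simp add: r_def)
  ultimately show "\<exists>r>0. \<forall>c. \<bar>c\<bar> \<le> r \<longrightarrow> c *\<^sub>R y \<in> (\<Inter>i\<in>J. T i -` cball 0 1)"
    by auto
qed

lemma barrel_of_pointwise_bounded:
  fixes T :: "'i \<Rightarrow> 'g::{real_vector,topological_space} \<Rightarrow> 'w::real_normed_vector"
  assumes lin: "\<And>i. i \<in> J \<Longrightarrow> linear (T i)"
    and cont: "\<And>i. i \<in> J \<Longrightarrow> continuous_on UNIV (T i)"
    and bounded: "\<And>y. \<exists>M. \<forall>i\<in>J. norm (T i y) \<le> M"
  defines "W \<equiv> \<Inter>i\<in>J. T i -` cball 0 1"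
  shows "closed W" and "convex W" and "circled W" and "absorbing W"
proof -
  show "closed W"
    unfolding W_def by (intro closed_INT ballI closed_vimage[OF closed_cball] cont)
  show "convex W"
    unfolding W_def by (intro convex_INT ballI convex_linear_vimage[OF lin convex_cball])
  show "absorbing W"
    unfolding W_def by (rule absorbing_pointwise_bounded[OF lin bounded])
  show "circled W"
    unfolding circled_def
  proof (intro allI impI subsetI)
    fix c :: real and z
    assume c: "\<bar>c\<bar> \<le> 1" and "z \<in> (\<lambda>x. c *\<^sub>R x) ` W"
    then obtain x where x: "x \<in> W" and z: "z = c *\<^sub>R x"
      by blast
    have "norm (T i z) \<le> 1" if "i \<in> J" for i
      using c x that by (simp add: W_def z linear_scale[OF lin[OF that]] mult_le_one)
    then show "z \<in> W"
      by (simp add: W_def)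
  qed
qed

text \<open>A Banach--Steinhaus argument: the barrel of a pointwise bounded family is a
  neighbourhood of zero.\<close>

lemma barrelled_pointwise_bounded_uniformly_small:
  fixes br :: "'g::{real_vector,t2_space} \<Rightarrow> 'g \<Rightarrow> 'g"
    and T :: "'i \<Rightarrow> 'g \<Rightarrow> 'w::real_normed_vector"
  assumes "lc_lie_algebra br" "barrelled TYPE('g)"
    and lin: "\<And>i. i \<in> J \<Longrightarrow> linear (T i)"
    and cont: "\<And>i. i \<in> J \<Longrightarrow> continuous_on UNIV (T i)"
    and bounded: "\<And>y. \<exists>M. \<forall>i\<in>J. norm (T i y) \<le> M"
    and "(\<eta> \<longlongrightarrow> 0) F" "e > 0"
  shows "eventually (\<lambda>x. \<forall>i\<in>J. norm (T i (\<eta> x)) \<le> e) F"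
proof -
  define W where "W = (\<Inter>i\<in>J. T i -` cball 0 1)"
  obtain U where U: "open U" "0 \<in> U" "U \<subseteq> W"
    using assms(2) barrel_of_pointwise_bounded[OF lin cont bounded]
    unfolding barrelled_def W_def by meson
  have "((\<lambda>x. inverse e *\<^sub>R \<eta> x) \<longlongrightarrow> inverse e *\<^sub>R 0) F"
    by (rule lc_lie_algebra_tendsto_scaleR[OF assms(1) \<open>(\<eta> \<longlongrightarrow> 0) F\<close> tendsto_const])
  with U(1,2) have "eventually (\<lambda>x. inverse e *\<^sub>R \<eta> x \<in> U) F"
    by (intro topological_tendstoD) auto
  then show ?thesis
  proof (rule eventually_mono)
    fix x assume "inverse e *\<^sub>R \<eta> x \<in> U"
    with U(3) have "inverse e *\<^sub>R \<eta> x \<in> W"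
      by blast
    with \<open>e > 0\<close> have "norm (T i (\<eta> x)) \<le> e" if "i \<in> J" for i
      using that by (auto simp: W_def linear_scale[OF lin[OF that]] field_simps)
    then show "\<forall>i\<in>J. norm (T i (\<eta> x)) \<le> e"
      by blast
  qed
qed

lemma continuous_on_pin_snoc:
  fixes \<pi> :: "'g::{real_vector,topological_space} \<Rightarrow> 'v::complex_inner \<Rightarrow> 'v"
  assumes "continuous_rep \<pi>"
  shows "continuous_on UNIV (\<lambda>y. pin \<pi> (xs @ [y]) \<psi>)"
proof -
  define n where "n = Suc (length xs)"
  define h where "h y = (\<lambda>i\<in>{..<n}. if i < length xs then xs ! i else y)" for y :: 'g
  have "continuous_map euclidean (product_topology (\<lambda>_. euclidean) {..<n}) h"
    unfolding continuous_map_componentwise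
  proof (intro conjI ballI)
    fix i assume "i \<in> {..<n}"
    then show "continuous_map euclidean euclidean (\<lambda>y. h y i)"
      by (cases "i < length xs") (simp_all add: h_def)
  qed (auto simp: h_def)
  moreover have "continuous_map (product_topology (\<lambda>_. euclidean) {..<n}) euclidean
      (\<lambda>x. pin \<pi> (map x [0..<n]) \<psi>)"
    using assms unfolding continuous_rep_def by blast
  ultimately have "continuous_map euclidean euclidean (\<lambda>y. pin \<pi> (map (h y) [0..<n]) \<psi>)"
    by (rule continuous_map_compose[unfolded o_def])
  moreover have "map (h y) [0..<n] = xs @ [y]" for y
    by (rule nth_equalityI) (auto simp: h_def n_def nth_append less_Suc_eq)
  ultimately show ?thesis
    by simp
qed

lemma continuous_rep_locally_bounded:
  fixes \<pi> :: "'g::{real_vector,topological_space} \<Rightarrow> 'v::complex_inner \<Rightarrow> 'v"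
  assumes "continuous_rep \<pi>"
  obtains W K where "open W" "0 \<in> W"
    "\<And>us. length us = n \<Longrightarrow> set us \<subseteq> W \<Longrightarrow> norm (pin \<pi> us \<psi>) \<le> K"
proof -
  define f where "f x = pin \<pi> (map x [0..<n]) \<psi>" for x :: "nat \<Rightarrow> 'g"
  define X where "X = product_topology (\<lambda>_. (euclidean :: 'g topology)) {..<n}"
  define x0 where "x0 = (\<lambda>i\<in>{..<n}. (0::'g))"
  have "continuous_map X euclidean f"
    using assms unfolding continuous_rep_def f_def X_def by blast
  then have "openin X {x \<in> topspace X. f x \<in> ball (f x0) 1}"
    by (rule openin_continuous_map_preimage) simp
  moreover have "x0 \<in> {x \<in> topspace X. f x \<in> ball (f x0) 1}"
    by (simp add: X_def x0_def)
  ultimately obtain V where V: "\<forall>i\<in>{..<n}. openin euclidean (V i)" "x0 \<in> Pi\<^sub>E {..<n} V"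
    "Pi\<^sub>E {..<n} V \<subseteq> {x \<in> topspace X. f x \<in> ball (f x0) 1}"
    unfolding X_def openin_product_topology_alt by blast
  have "open (\<Inter>i<n. V i)" "0 \<in> (\<Inter>i<n. V i)"
    using V(1,2) by (auto simp: x0_def open_INT)
  moreover have "norm (pin \<pi> us \<psi>) \<le> 1 + norm (f x0)"
    if us: "length us = n" "set us \<subseteq> (\<Inter>i<n. V i)" for us
  proof -
    define x where "x = (\<lambda>i\<in>{..<n}. us ! i)"
    have "us ! i \<in> V i" if "i < n" for i
      using us nth_mem[of i us] that by blast
    then have "x \<in> Pi\<^sub>E {..<n} V"
      by (simp add: x_def)
    then have "f x \<in> ball (f x0) 1"
      using V(3) by blast
    moreover have "map x [0..<n] = us"
      by (rule nth_equalityI) (auto simp: x_def us(1))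
    ultimately have "norm (f x0 - pin \<pi> us \<psi>) < 1"
      by (simp add: f_def dist_norm)
    then show ?thesis
      using norm_triangle_sub[of "pin \<pi> us \<psi>" "f x0"] norm_minus_commute[of "f x0" "pin \<pi> us \<psi>"] by linarith
  qed
  ultimately show ?thesis
    using that by blast
qed

lemma gn_bounded_scaled_into:
  fixes B :: "'g::{real_vector,topological_space} list set"
  assumes "gn_bounded n B" "open W" "0 \<in> W"
  obtains t where "t > 0" "\<And>xs. xs \<in> B \<Longrightarrow> set (map ((*\<^sub>R) (inverse t)) xs) \<subseteq> W"
proof -
  have "\<forall>i\<in>{..<n}. \<exists>s>0. \<forall>t. s < t \<longrightarrow> (\<lambda>xs. xs ! i) ` B \<subseteq> (\<lambda>x. t *\<^sub>R x) ` W"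
    using assms unfolding gn_bounded_def tvs_bounded_def by blast
  then obtain s where s: "\<And>i. i < n \<Longrightarrow> s i > 0"
    and s_absorbs: "\<And>i t. i < n \<Longrightarrow> s i < t \<Longrightarrow> (\<lambda>xs. xs ! i) ` B \<subseteq> (\<lambda>x. t *\<^sub>R x) ` W"
    by (metis lessThan_iff)
  define t where "t = 1 + (\<Sum>i<n. s i)"
  have s_less: "s i < t" if "i < n" for i
    using member_le_sum[of i "{..<n}" s] s that by (fastforce simp: t_def)
  have "t > 0"
    using sum_nonneg[of "{..<n}" s] s by (fastforce simp: t_def)
  moreover have "set (map ((*\<^sub>R) (inverse t)) xs) \<subseteq> W" if "xs \<in> B" for xs
  proof
    fix z assume "z \<in> set (map ((*\<^sub>R) (inverse t)) xs)"
    then obtain i where i: "i < length xs" "z = inverse t *\<^sub>R xs ! i"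
      by (auto simp: in_set_conv_nth)
    have "i < n"
      using assms(1) that i(1) by (simp add: gn_bounded_def)
    with s_absorbs[OF this s_less[OF this]] that obtain w where "w \<in> W" "xs ! i = t *\<^sub>R w"
      by blast
    with i(2) \<open>t > 0\<close> show "z \<in> W"
      by simp
  qed
  ultimately show ?thesis
    using that by blast
qed

lemma gn_bounded_imp_pin_bounded:
  fixes \<pi> :: "'g::{real_vector,topological_space} \<Rightarrow> 'v::complex_inner \<Rightarrow> 'v"
  assumes "unitary_rep br \<pi>" "continuous_rep \<pi>" "gn_bounded n B"
  shows "pin_bounded \<pi> B"
  unfolding pin_bounded_def
proof
  fix \<psi>
  interpret unitary_representation br \<pi>
    by (rule unitary_representation.intro) (rule assms(1))
  obtain W K where W: "open W" "0 \<in> W"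
    and K: "\<And>us. length us = n \<Longrightarrow> set us \<subseteq> W \<Longrightarrow> norm (pin \<pi> us \<psi>) \<le> K"
    using continuous_rep_locally_bounded[OF assms(2), where n = n and \<psi> = \<psi>] by metis
  obtain t where t: "t > 0" "\<And>xs. xs \<in> B \<Longrightarrow> set (map ((*\<^sub>R) (inverse t)) xs) \<subseteq> W"
    using gn_bounded_scaled_into[OF assms(3) W] by metis
  have "norm (pin \<pi> xs \<psi>) \<le> t ^ n * K" if "xs \<in> B" for xs
  proof -
    have len: "length xs = n"
      using assms(3) that by (simp add: gn_bounded_def)
    have "xs = map ((*\<^sub>R) t) (map ((*\<^sub>R) (inverse t)) xs)"
      using t(1) by (simp add: map_idI)
    then have "pin \<pi> xs \<psi> = t ^ n *\<^sub>R pin \<pi> (map ((*\<^sub>R) (inverse t)) xs) \<psi>"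
      by (metis pin_map_scaleR length_map len)
    with K[of "map ((*\<^sub>R) (inverse t)) xs"] t len that show ?thesis
      by (simp add: mult_left_mono)
  qed
  then have "pin_sup \<pi> B \<psi> \<le> ereal (t ^ n * K)"
    by (simp add: pin_sup_def SUP_le_iff)
  also have "\<dots> < \<infinity>"
    by simp
  finally show "pin_sup \<pi> B \<psi> < \<infinity>" .
qed

section \<open>Differentiating \<open>\<pi>(\<xi>\<^sub>t)\<psi>\<^sub>t\<close>\<close>

lemma binomial_Leibniz_step:
  fixes f :: "nat \<Rightarrow> nat \<Rightarrow> 'a::real_vector"
  shows "(\<Sum>j\<le>k. real (k choose j) *\<^sub>R (f (Suc j) (k - j) + f j (Suc (k - j))))
       = (\<Sum>j\<le>Suc k. real (Suc k choose j) *\<^sub>R f j (Suc k - j))"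
proof -
  have r1: "(\<Sum>j\<le>Suc k. real (Suc k choose j) *\<^sub>R f j (Suc k - j))
      = f 0 (Suc k) + (\<Sum>j\<le>k. real (k choose j) *\<^sub>R f (Suc j) (k - j))
          + (\<Sum>j\<le>k. real (k choose Suc j) *\<^sub>R f (Suc j) (k - j))"
    by (simp add: sum.atMost_Suc_shift scaleR_add_left sum.distrib algebra_simps del: sum.atMost_Suc)
  have "(\<Sum>j\<le>Suc k. real (k choose j) *\<^sub>R f j (Suc k - j))
      = f 0 (Suc k) + (\<Sum>j\<le>k. real (k choose Suc j) *\<^sub>R f (Suc j) (k - j))"
    by (simp add: sum.atMost_Suc_shift del: sum.atMost_Suc)
  moreover have "(\<Sum>j\<le>Suc k. real (k choose j) *\<^sub>R f j (Suc k - j))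
      = (\<Sum>j\<le>k. real (k choose j) *\<^sub>R f j (Suc (k - j)))"
    by (simp add: Suc_diff_le)
  ultimately have r2: "(\<Sum>j\<le>k. real (k choose j) *\<^sub>R f j (Suc (k - j)))
      = f 0 (Suc k) + (\<Sum>j\<le>k. real (k choose Suc j) *\<^sub>R f (Suc j) (k - j))"
    by simp
  show ?thesis
    unfolding r1 by (simp add: scaleR_add_right sum.distrib r2 algebra_simps)
qed

locale barrelled_seminorm_family = pin_seminorm_family br \<pi> \<B>
  for br :: "'g::{real_vector,t2_space} \<Rightarrow> 'g \<Rightarrow> 'g" and \<pi> :: "'g \<Rightarrow> 'v::complex_inner \<Rightarrow> 'v"
    and \<B> +
  assumes lie: "lc_lie_algebra br"
    and barrelled: "barrelled TYPE('g)"
    and continuous: "continuous_rep \<pi>"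
    and append_closed: "B \<in> \<B> \<Longrightarrow> (\<lambda>xs. xs @ [y]) ` B \<in> \<B>"
begin

lemma pin_tendsto_pi_right:
  assumes "pin_tendsto \<pi> \<B> \<phi> \<psi> F"
  shows "pin_tendsto \<pi> \<B> (\<lambda>s. \<pi> x (\<phi> s)) (\<pi> x \<psi>) F"
proof (rule pin_tendsto_dominated)
  fix B s assume B: "B \<in> \<B>"
  show "pin_seminorm \<pi> B (\<pi> x (\<phi> s) - \<pi> x \<psi>) \<le> pin_seminorm \<pi> ((\<lambda>xs. xs @ [x]) ` B) (\<phi> s - \<psi>)"
    using pin_seminorm_pi_le[OF bounded_family[OF B] bounded_family[OF append_closed[OF B]],
        where \<psi> = "\<phi> s - \<psi>"]
    by (simp add: linear_diff[OF linear_pi])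
next
  fix B assume "B \<in> \<B>"
  with assms show "((\<lambda>s. pin_seminorm \<pi> ((\<lambda>xs. xs @ [x]) ` B) (\<phi> s - \<psi>)) \<longlongrightarrow> 0) F"
    unfolding pin_tendsto_def using append_closed by blast
qed

text \<open>A convergent sequence \<open>v\<close>, unlike a convergent net, is bounded for every seminorm;
  this makes the maps \<open>\<xi> \<mapsto> \<pi>\<^sub>n(xs) \<pi>(\<xi>) (v m)\<close> pointwise bounded.\<close>

lemma pin_tendsto_pi_sequentially:
  assumes "\<eta> \<longlonglongrightarrow> 0" "pin_tendsto \<pi> \<B> v \<psi> sequentially"
  shows "pin_tendsto \<pi> \<B> (\<lambda>m. \<pi> (\<eta> m) (v m)) 0 sequentially"
proof (rule pin_tendstoI)
  fix B and e :: real
  assume B: "B \<in> \<B>" and "e > 0"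
  define T where "T i = (\<lambda>y. pin \<pi> (snd i) (\<pi> y (v (fst i))))" for i :: "nat \<times> 'g list"
  have bounded: "\<exists>M. \<forall>i\<in>UNIV \<times> B. norm (T i y) \<le> M" for y
  proof -
    define B' where "B' = (\<lambda>xs. xs @ [y]) ` B"
    have B': "pin_bounded \<pi> B'"
      unfolding B'_def by (rule bounded_family[OF append_closed[OF B]])
    have "((\<lambda>m. pin_seminorm \<pi> B' (v m - \<psi>)) \<longlongrightarrow> 0) sequentially"
      using assms(2) append_closed[OF B] unfolding pin_tendsto_def B'_def by blast
    then obtain K where K: "\<And>m. pin_seminorm \<pi> B' (v m - \<psi>) \<le> K"
      by (metis BseqE convergentI convergent_imp_Bseq abs_le_D1 real_norm_def)
    have "norm (T (m, xs) y) \<le> K + pin_seminorm \<pi> B' \<psi>" if "xs \<in> B" for m xs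
    proof -
      have "norm (T (m, xs) y) \<le> pin_seminorm \<pi> B' (v m)"
        using norm_pin_le_pin_seminorm[OF B', of "xs @ [y]"] that
        by (simp add: T_def B'_def pin_append)
      also have "\<dots> \<le> pin_seminorm \<pi> B' (v m - \<psi>) + pin_seminorm \<pi> B' \<psi>"
        using pin_seminorm_triangle[OF B', of "v m - \<psi>" \<psi>] by simp
      also have "\<dots> \<le> K + pin_seminorm \<pi> B' \<psi>"
        using K[of m] by simp
      finally show ?thesis .
    qed
    then show ?thesis
      by blast
  qed
  have lin: "linear (T i)" and cont: "continuous_on UNIV (T i)" if "i \<in> UNIV \<times> B" for i
    using linear_pin_pi_left continuous_on_pin_snoc[OF continuous, of "snd i" "v (fst i)"]
    by (simp_all add: T_def pin_append)
  have "eventually (\<lambda>m. \<forall>i\<in>UNIV \<times> B. norm (T i (\<eta> m)) \<le> e) sequentially"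
    by (rule barrelled_pointwise_bounded_uniformly_small[OF lie barrelled lin cont bounded assms(1) \<open>e > 0\<close>])
  then show "eventually (\<lambda>m. pin_seminorm \<pi> B (\<pi> (\<eta> m) (v m) - 0) \<le> e) sequentially"
  proof (rule eventually_mono)
    fix m assume "\<forall>i\<in>UNIV \<times> B. norm (T i (\<eta> m)) \<le> e"
    then show "pin_seminorm \<pi> B (\<pi> (\<eta> m) (v m) - 0) \<le> e"
      using \<open>e > 0\<close> by (simp add: pin_seminorm_le_iff[OF bounded_family[OF B]] T_def)
  qed
qed

lemma pin_tendsto_pi_left_zero:
  fixes t :: "'a::first_countable_topology"
  assumes "(\<zeta> \<longlongrightarrow> 0) (at t within I)" "pin_tendsto \<pi> \<B> \<phi> \<psi> (at t within I)"
  shows "pin_tendsto \<pi> \<B> (\<lambda>s. \<pi> (\<zeta> s) (\<phi> s)) 0 (at t within I)"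
  unfolding pin_tendsto_def
proof
  fix B assume "B \<in> \<B>"
  show "((\<lambda>s. pin_seminorm \<pi> B (\<pi> (\<zeta> s) (\<phi> s) - 0)) \<longlongrightarrow> 0) (at t within I)"
    unfolding tendsto_at_iff_sequentially
  proof (intro allI impI)
    fix X assume "\<forall>i. X i \<in> I - {t}" "X \<longlonglongrightarrow> t"
    then have X: "filterlim X (at t within I) sequentially"
      by (simp add: filterlim_at)
    have "pin_tendsto \<pi> \<B> (\<lambda>m. \<pi> (\<zeta> (X m)) (\<phi> (X m))) 0 sequentially"
      using pin_tendsto_pi_sequentially[OF filterlim_compose[OF assms(1) X]
          pin_tendsto_compose[OF assms(2) X]]
      by (simp add: o_def)
    with \<open>B \<in> \<B>\<close> show "((\<lambda>s. pin_seminorm \<pi> B (\<pi> (\<zeta> s) (\<phi> s) - 0)) \<circ> X) \<longlonglongrightarrow> 0"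
      unfolding pin_tendsto_def o_def by blast
  qed
qed

lemma pin_tendsto_pi:
  fixes t :: "'a::first_countable_topology"
  assumes "(\<zeta> \<longlongrightarrow> x) (at t within I)" "pin_tendsto \<pi> \<B> \<phi> \<psi> (at t within I)"
  shows "pin_tendsto \<pi> \<B> (\<lambda>s. \<pi> (\<zeta> s) (\<phi> s)) (\<pi> x \<psi>) (at t within I)"
proof -
  have "((\<lambda>s. \<zeta> s - x) \<longlongrightarrow> 0) (at t within I)"
    using lc_lie_algebra_tendsto_diff[OF lie assms(1) tendsto_const[of x]] by simp
  from pin_tendsto_add[OF pin_tendsto_pi_left_zero[OF this assms(2)] pin_tendsto_pi_right[OF assms(2), of x]]
  show ?thesis
    by (simp add: linear_diff[OF linear_pi_left])
qed

lemma pin_tendsto_pi_diff_quotient: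
  assumes "((\<lambda>s. inverse (s - t) *\<^sub>R (\<zeta> s - \<zeta> t)) \<longlongrightarrow> \<zeta>') (at t within I)"
    and "pin_tendsto \<pi> \<B> \<phi> (\<phi> t) (at t within I)"
    and "pin_tendsto \<pi> \<B> (\<lambda>s. inverse (s - t) *\<^sub>R (\<phi> s - \<phi> t)) \<phi>' (at t within I)"
  shows "pin_tendsto \<pi> \<B> (\<lambda>s. inverse (s - t) *\<^sub>R (\<pi> (\<zeta> s) (\<phi> s) - \<pi> (\<zeta> t) (\<phi> t)))
           (\<pi> \<zeta>' (\<phi> t) + \<pi> (\<zeta> t) \<phi>') (at t within I)"
  unfolding scaleR_pi_diff
  by (rule pin_tendsto_add; rule pin_tendsto_pi) (use assms in auto)

lemma pin_tendsto_binomial_diff_quotient: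
  assumes \<Xi>_deriv: "\<And>j. j \<le> k \<Longrightarrow>
      ((\<lambda>s. inverse (s - t) *\<^sub>R (\<Xi> j s - \<Xi> j t)) \<longlongrightarrow> \<Xi> (Suc j) t) (at t within I)"
    and \<Psi>_cont: "\<And>j. j \<le> k \<Longrightarrow> pin_tendsto \<pi> \<B> (\<Psi> j) (\<Psi> j t) (at t within I)"
    and \<Psi>_deriv: "\<And>j. j \<le> k \<Longrightarrow>
      pin_tendsto \<pi> \<B> (\<lambda>s. inverse (s - t) *\<^sub>R (\<Psi> j s - \<Psi> j t)) (\<Psi> (Suc j) t) (at t within I)"
  shows "pin_tendsto \<pi> \<B>
    (\<lambda>s. inverse (s - t) *\<^sub>R
      ((\<Sum>j\<le>k. of_nat (k choose j) *\<^sub>R \<pi> (\<Xi> j s) (\<Psi> (k - j) s)) -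
       (\<Sum>j\<le>k. of_nat (k choose j) *\<^sub>R \<pi> (\<Xi> j t) (\<Psi> (k - j) t))))
    (\<Sum>j\<le>Suc k. of_nat (Suc k choose j) *\<^sub>R \<pi> (\<Xi> j t) (\<Psi> (Suc k - j) t)) (at t within I)"
proof -
  have "pin_tendsto \<pi> \<B>
      (\<lambda>s. \<Sum>j\<le>k. of_nat (k choose j) *\<^sub>R
        (inverse (s - t) *\<^sub>R (\<pi> (\<Xi> j s) (\<Psi> (k - j) s) - \<pi> (\<Xi> j t) (\<Psi> (k - j) t))))
      (\<Sum>j\<le>k. of_nat (k choose j) *\<^sub>R
        (\<pi> (\<Xi> (Suc j) t) (\<Psi> (k - j) t) + \<pi> (\<Xi> j t) (\<Psi> (Suc (k - j)) t))) (at t within I)"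
    by (intro pin_tendsto_sum pin_tendsto_scaleR pin_tendsto_pi_diff_quotient
        \<Xi>_deriv \<Psi>_cont \<Psi>_deriv) auto
  moreover have "inverse (s - t) *\<^sub>R
        ((\<Sum>j\<le>k. of_nat (k choose j) *\<^sub>R \<pi> (\<Xi> j s) (\<Psi> (k - j) s)) -
         (\<Sum>j\<le>k. of_nat (k choose j) *\<^sub>R \<pi> (\<Xi> j t) (\<Psi> (k - j) t)))
      = (\<Sum>j\<le>k. of_nat (k choose j) *\<^sub>R
        (inverse (s - t) *\<^sub>R (\<pi> (\<Xi> j s) (\<Psi> (k - j) s) - \<pi> (\<Xi> j t) (\<Psi> (k - j) t))))" for s
    by (simp add: scaleR_right.sum sum_subtractf[symmetric] algebra_simps)
  ultimately show ?thesis
    by (simp only: binomial_Leibniz_step[of k "\<lambda>j i. \<pi> (\<Xi> j t) (\<Psi> i t)"])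
qed

lemma Cn_family_pi_binomial:
  assumes \<Xi>: "Cn_family euclidean I n \<Xi>" and \<Psi>: "Cn_family (pin_topology \<pi> \<B>) I n \<Psi>"
  shows "Cn_family (pin_topology \<pi> \<B>) I n
           (\<lambda>k t. \<Sum>j\<le>k. of_nat (k choose j) *\<^sub>R \<pi> (\<Xi> j t) (\<Psi> (k - j) t))"
proof -
  have \<Xi>_cont: "(\<Xi> j \<longlongrightarrow> \<Xi> j t) (at t within I)" if "enat j \<le> n" "t \<in> I" for j t
    using \<Xi> that unfolding Cn_family_def continuous_map_top_of_set_iff_limitin by simp
  have \<Psi>_cont: "pin_tendsto \<pi> \<B> (\<Psi> j) (\<Psi> j t) (at t within I)" if "enat j \<le> n" "t \<in> I" for j t
    using \<Psi> that
    unfolding Cn_family_def continuous_map_top_of_set_iff_limitin limitin_pin_topology_iff by blast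
  have \<Xi>_deriv: "((\<lambda>s. inverse (s - t) *\<^sub>R (\<Xi> j s - \<Xi> j t)) \<longlongrightarrow> \<Xi> (Suc j) t) (at t within I)"
    if "enat j < n" "t \<in> I" for j t
    using \<Xi> that unfolding Cn_family_def by simp
  have \<Psi>_deriv: "pin_tendsto \<pi> \<B> (\<lambda>s. inverse (s - t) *\<^sub>R (\<Psi> j s - \<Psi> j t)) (\<Psi> (Suc j) t)
      (at t within I)" if "enat j < n" "t \<in> I" for j t
    using \<Psi> that unfolding Cn_family_def limitin_pin_topology_iff by blast
  show ?thesis
    unfolding Cn_family_def continuous_map_top_of_set_iff_limitin limitin_pin_topology_iff
  proof (intro conjI allI impI ballI)
    fix k t assume k: "enat k \<le> n" and t: "t \<in> I"
    then have "enat j \<le> n" "enat (k - j) \<le> n" if "j \<le> k" for j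
      using that order_trans[OF enat_ord_simps(1)[THEN iffD2] k] by auto
    then show "pin_tendsto \<pi> \<B> (\<lambda>t. \<Sum>j\<le>k. of_nat (k choose j) *\<^sub>R \<pi> (\<Xi> j t) (\<Psi> (k - j) t))
        (\<Sum>j\<le>k. of_nat (k choose j) *\<^sub>R \<pi> (\<Xi> j t) (\<Psi> (k - j) t)) (at t within I)"
      by (intro pin_tendsto_sum pin_tendsto_scaleR pin_tendsto_pi \<Xi>_cont \<Psi>_cont t) auto
  next
    fix k t assume k: "enat k < n" and t: "t \<in> I"
    then have "enat j < n" if "j \<le> k" for j
      using that le_less_trans[OF enat_ord_simps(1)[THEN iffD2] k] by auto
    then show "pin_tendsto \<pi> \<B>
        (\<lambda>s. inverse (s - t) *\<^sub>R
          ((\<Sum>j\<le>k. of_nat (k choose j) *\<^sub>R \<pi> (\<Xi> j s) (\<Psi> (k - j) s)) -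
           (\<Sum>j\<le>k. of_nat (k choose j) *\<^sub>R \<pi> (\<Xi> j t) (\<Psi> (k - j) t))))
        (\<Sum>j\<le>Suc k. of_nat (Suc k choose j) *\<^sub>R \<pi> (\<Xi> j t) (\<Psi> (Suc k - j) t)) (at t within I)"
      by (intro pin_tendsto_binomial_diff_quotient \<Xi>_deriv \<Psi>_cont \<Psi>_deriv t)
        (auto intro: less_imp_le)
  qed
qed

end

lemma strong_top_eq_pin_topology: "strong_top \<pi> = pin_topology \<pi> {B. \<exists>n. gn_bounded n B}"
  unfolding strong_top_def pin_topology_def pin_sup_def
  by (rule arg_cong[where f = seminorm_topology]) blast

lemma weak_top_eq_pin_topology: "weak_top \<pi> = pin_topology \<pi> (range (\<lambda>xs. {xs}))"
  unfolding weak_top_def pin_topology_def pin_sup_def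
  by (simp add: image_image full_SetCompr_eq)

lemma barrelled_seminorm_family_strong:
  fixes br :: "'g::{real_vector,t2_space} \<Rightarrow> 'g \<Rightarrow> 'g" and \<pi> :: "'g \<Rightarrow> 'v::complex_inner \<Rightarrow> 'v"
  assumes "lc_lie_algebra br" "barrelled TYPE('g)" "unitary_rep br \<pi>" "continuous_rep \<pi>"
  shows "barrelled_seminorm_family br \<pi> {B. \<exists>n. gn_bounded n B}"
  by unfold_locales
    (use assms in \<open>auto intro: gn_bounded_imp_pin_bounded[OF assms(3,4)] gn_bounded_append[OF assms(1)]\<close>)

lemma barrelled_seminorm_family_weak:
  fixes br :: "'g::{real_vector,t2_space} \<Rightarrow> 'g \<Rightarrow> 'g" and \<pi> :: "'g \<Rightarrow> 'v::complex_inner \<Rightarrow> 'v"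
  assumes "lc_lie_algebra br" "barrelled TYPE('g)" "unitary_rep br \<pi>" "continuous_rep \<pi>"
  shows "barrelled_seminorm_family br \<pi> (range (\<lambda>xs. {xs}))"
  by unfold_locales (use assms in \<open>auto simp: pin_bounded_def pin_sup_def\<close>)

theorem proposition3p18:
  fixes br :: "'g::{real_vector,t2_space} \<Rightarrow> 'g \<Rightarrow> 'g"
    and \<pi> :: "'g \<Rightarrow> 'v::complex_inner \<Rightarrow> 'v"
    and n :: enat
    and I :: "real set"
    and \<Xi> :: "nat \<Rightarrow> real \<Rightarrow> 'g"
    and \<Psi> :: "nat \<Rightarrow> real \<Rightarrow> 'v"
    and T :: "'v topology"
  assumes "lc_lie_algebra br"
    and "barrelled TYPE('g)"
    and "unitary_rep br \<pi>"
    and "continuous_rep \<pi>"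
    and "is_interval I"
    and "T = strong_top \<pi> \<or> T = weak_top \<pi>"
    and "Cn_family (euclidean :: 'g topology) I n \<Xi>"
    and "Cn_family T I n \<Psi>"
  shows "Cn_family T I n
           (\<lambda>k t. \<Sum>j\<le>k. of_nat (k choose j) *\<^sub>R \<pi> (\<Xi> j t) (\<Psi> (k - j) t))"
proof -
  obtain \<B> where T: "T = pin_topology \<pi> \<B>" and "barrelled_seminorm_family br \<pi> \<B>"
    using assms(6) strong_top_eq_pin_topology weak_top_eq_pin_topology
      barrelled_seminorm_family_strong[OF assms(1-4)] barrelled_seminorm_family_weak[OF assms(1-4)]
    by metis
  then interpret barrelled_seminorm_family br \<pi> \<B>
    by simp
  show ?thesis
    using Cn_family_pi_binomial assms(7,8) unfolding T by blast
qed

end
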